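(* Let $L>0$, $J\ge2$ and $\delta t>0$ with $\delta t/\delta x^2\le1/2$, and set $\eta=\max_{1\le\ell\le J-1}|1+\delta t\,\lambda_\ell|$. Then for all $n\ge1$, $\delta t\sum_{k=0}^{n-1}\eta^k\le 2L^2$.
   Context: $\delta x=L/(J-1)$, $\lambda_\ell=-\frac4{\delta x^2}\sin^2\big(\frac{\ell\pi}{2J}\big)$ for $0\le\ell\le J-1$. *)

theory Defs
  imports Complex_Main
begin

definition grid_dx :: "real \<Rightarrow> nat \<Rightarrow> real" where
  "grid_dx L J = L / (real J - 1)"

definition eig :: "real \<Rightarrow> nat \<Rightarrow> nat \<Rightarrow> real" where
  "eig L J l = - (4 / (grid_dx L J)^2) * (sin (real l * pi / (2 * real J)))^2"

definition eta :: "real \<Rightarrow> nat \<Rightarrow> real \<Rightarrow> real" where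
  "eta L J dt = Max ((\<lambda>l. \<bar>1 + dt * eig L J l\<bar>) ` {1..J-1})"

end

theory Submission
  imports Defs
begin

text \<open>
With r = dt/dx^2 \<le> 1/2 and q = sin^2(l pi/(2J)), the amplification factor is
1 + dt lambda_l = 1 - 4 r q. Both q and 1 - q = sin^2((J - l) pi/(2J)) are at least 1/(2J^2),
by sin y \<ge> 5y/6 on [0,1]; hence |1 - 4 r q| \<le> 1 - 2r/J^2 \<le> 1 - dt/(2L^2), the last step
because dx J \<le> 2L. So eta \<le> 1 - dt/(2L^2), and the geometric sum is at most 2L^2/dt.
\<close>

lemma five_sixths_le_sin:
  fixes y :: real
  assumes "0 \<le> y" "y \<le> 1"
  shows "5/6 * y \<le> sin y"
proof -
  have "y * y \<le> 1"
    using assms by (simp add: mult_le_one)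
  then have "y ^ 3 \<le> y"
    using mult_left_le[of "y * y" y] assms by (simp add: power3_eq_cube)
  moreover have "\<bar>sin y - y\<bar> \<le> y ^ 3 / 6"
    using Maclaurin_sin_bound[of y 3] assms
    by (simp add: sin_coeff_def eval_nat_numeral fact_numeral)
  ultimately show ?thesis
    by linarith
qed

lemma sin_grid_angle_ge:
  fixes J l :: nat
  assumes "1 \<le> l" "l < J"
  shows "1 / (2 * real J ^ 2) \<le> sin (real l * pi / (2 * real J)) ^ 2"
proof -
  define y where "y = pi / (2 * real J)"
  have J: "real J \<ge> 2" using assms by linarith
  have "1 / real J \<le> y" "y \<le> 1"
    using J pi_ge_two pi_less_4 by (simp_all add: y_def field_simps)
  then have "5 / (6 * real J) \<le> sin y"
    using five_sixths_le_sin[of y] J by (simp add: y_def)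
  also have "sin y \<le> sin (real l * y)"
  proof (rule sin_monotone_2pi_le)
    have "0 < y"
      using J by (simp add: y_def)
    then show "- (pi / 2) \<le> y"
      using pi_gt_zero by linarith
    show "y \<le> real l * y"
      using \<open>0 < y\<close> assms mult_right_mono[of 1 "real l" y] by simp
    show "real l * y \<le> pi / 2"
      using assms J by (simp add: y_def field_simps)
  qed
  also have "real l * y = real l * pi / (2 * real J)"
    by (simp add: y_def)
  finally have "(5 / (6 * real J)) ^ 2 \<le> sin (real l * pi / (2 * real J)) ^ 2"
    using J by (intro power_mono) auto
  moreover have "1 / (2 * real J ^ 2) \<le> (5 / (6 * real J)) ^ 2"
    using J by (simp add: field_simps power2_eq_square)
  ultimately show ?thesis by linarith
qed

lemma sin_grid_angle_le:
  fixes J l :: nat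
  assumes "1 \<le> l" "l < J"
  shows "sin (real l * pi / (2 * real J)) ^ 2 \<le> 1 - 1 / (2 * real J ^ 2)"
proof -
  have "real (J - l) * pi / (2 * real J) = pi / 2 - real l * pi / (2 * real J)"
    using assms by (simp add: of_nat_diff field_simps)
  then have "sin (real (J - l) * pi / (2 * real J)) = cos (real l * pi / (2 * real J))"
    by (simp add: sin_cos_eq)
  then have "1 / (2 * real J ^ 2) \<le> cos (real l * pi / (2 * real J)) ^ 2"
    using sin_grid_angle_ge[of "J - l" J] assms by simp
  then show ?thesis
    using sin_cos_squared_add[of "real l * pi / (2 * real J)"] by linarith
qed

lemma abs_one_minus_four_mult_le:
  fixes r q a :: real
  assumes "0 \<le> r" "r \<le> 1/2" "a \<le> q" "q \<le> 1 - a"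
  shows "\<bar>1 - 4 * r * q\<bar> \<le> 1 - 4 * r * a"
proof -
  have "r * a \<le> r * q" using assms by (simp add: mult_left_mono)
  moreover have "r * (q + a) \<le> r"
    using assms mult_left_mono[of "q + a" 1 r] by simp
  ultimately show ?thesis
    using assms by (simp add: abs_le_iff algebra_simps)
qed

lemma abs_one_plus_eig_le:
  fixes L dt :: real and J l :: nat
  assumes "L > 0" "dt \<ge> 0" "dt / grid_dx L J ^ 2 \<le> 1/2" "1 \<le> l" "l < J"
  shows "\<bar>1 + dt * eig L J l\<bar> \<le> 1 - dt / (2 * L ^ 2)"
proof -
  define dx where "dx = grid_dx L J"
  define q where "q = sin (real l * pi / (2 * real J)) ^ 2"
  have J: "real J \<ge> 2" using assms by linarith
  have dx_pos: "dx > 0" using assms J by (simp add: dx_def grid_dx_def)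
  have "dx * real J \<le> 2 * L"
    using assms J by (simp add: dx_def grid_dx_def field_simps)
  then have "(dx * real J) ^ 2 \<le> (2 * L) ^ 2"
    using dx_pos by (intro power_mono) simp_all
  then have "dt / (2 * L ^ 2) \<le> 4 * (dt / dx ^ 2) * (1 / (2 * real J ^ 2))"
    using assms dx_pos J by (simp add: field_simps power_mult_distrib mult_left_mono)
  moreover have "\<bar>1 - 4 * (dt / dx ^ 2) * q\<bar> \<le> 1 - 4 * (dt / dx ^ 2) * (1 / (2 * real J ^ 2))"
    using assms sin_grid_angle_ge[of l J] sin_grid_angle_le[of l J]
    by (intro abs_one_minus_four_mult_le) (simp_all add: dx_def q_def)
  moreover have "dt * eig L J l = - 4 * (dt / dx ^ 2) * q"
    by (simp add: eig_def dx_def q_def field_simps)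
  ultimately show ?thesis by linarith
qed

lemma eta_nonneg:
  assumes "J \<ge> 2"
  shows "0 \<le> eta L J dt"
proof -
  have "\<bar>1 + dt * eig L J 1\<bar> \<le> eta L J dt"
    unfolding eta_def using assms by (intro Max_ge) auto
  then show ?thesis by linarith
qed

lemma eta_le:
  assumes "L > 0" "J \<ge> 2" "dt \<ge> 0" "dt / grid_dx L J ^ 2 \<le> 1/2"
  shows "eta L J dt \<le> 1 - dt / (2 * L ^ 2)"
  unfolding eta_def using assms by (auto simp: Max_le_iff intro!: abs_one_plus_eig_le)

lemma geometric_sum_le_inverse_gap:
  fixes x e :: real
  assumes "0 \<le> x" "x \<le> 1 - e" "e > 0"
  shows "(\<Sum>k<n. x ^ k) \<le> 1 / e"
proof -
  have "(\<Sum>k<n. x ^ k) = (1 - x ^ n) / (1 - x)"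
    using assms by (simp add: sum_gp_strict)
  also have "\<dots> \<le> 1 / (1 - x)"
    using assms by (intro divide_right_mono) auto
  also have "\<dots> \<le> 1 / e"
    using assms by (intro divide_left_mono) auto
  finally show ?thesis .
qed

theorem proposition3p3:
  fixes L dt :: real and J n :: nat
  assumes "L > 0" and "J \<ge> 2" and "dt > 0"
    and "dt / (grid_dx L J)^2 \<le> 1/2"
    and "n \<ge> 1"
  shows "dt * (\<Sum>k<n. (eta L J dt) ^ k) \<le> 2 * L^2"
proof -
  \<comment> \<open>the bound also holds for n = 0\<close>
  have "(\<Sum>k<n. (eta L J dt) ^ k) \<le> 1 / (dt / (2 * L ^ 2))"
    using assms eta_nonneg eta_le by (intro geometric_sum_le_inverse_gap) auto
  then have "dt * (\<Sum>k<n. (eta L J dt) ^ k) \<le> dt * (1 / (dt / (2 * L ^ 2)))"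
    using assms by (intro mult_left_mono) auto
  then show ?thesis
    using assms by simp
qed

end
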